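(* Let $\mathcal{D}$ be a small category such that for every object $d$ of $\mathcal{D}$ the set of morphisms out of $d$ admits an admissible order (property (G1)), and let $G:\mathcal{C}\to\mathcal{D}$ be a faithful functor from a small category $\mathcal{C}$. Then $\mathcal{C}$ satisfies property (G1).
   Context: For a small category $\mathcal{C}$ and an object $c$, an admissible order on the morphisms out of $c$ is a choice, for every object $c'$, of a well-order $\preceq_{c'}$ on $\mathrm{Hom}(c,c')$ such that for all $f,f':c\to c'$ and $g:c'\to c''$, $f\prec_{c'}f'$ implies $g\circ f\prec_{c''}g\circ f'$. A category satisfies (G1) if the morphisms out of every object admit an admissible order. *)

theory Defs
  imports Main
begin

text \<open>Small categories: a set of objects and a set of arrows (of arbitrary HOL types),
  with domain, codomain, composition (comp g f = g o f, defined when cod f = dom g)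
  and identities.\<close>

record ('o, 'a) category =
  Obj :: "'o set"
  Arr :: "'a set"
  Dom :: "'a \<Rightarrow> 'o"
  Cod :: "'a \<Rightarrow> 'o"
  Comp :: "'a \<Rightarrow> 'a \<Rightarrow> 'a"
  Ident :: "'o \<Rightarrow> 'a"

definition Hom :: "('o, 'a) category \<Rightarrow> 'o \<Rightarrow> 'o \<Rightarrow> 'a set" where
  "Hom C x y = {f \<in> Arr C. Dom C f = x \<and> Cod C f = y}"

definition is_category :: "('o, 'a) category \<Rightarrow> bool" where
  "is_category C \<longleftrightarrow>
     (\<forall>f \<in> Arr C. Dom C f \<in> Obj C \<and> Cod C f \<in> Obj C) \<and>
     (\<forall>x \<in> Obj C. Ident C x \<in> Hom C x x) \<and>
     (\<forall>f \<in> Arr C. \<forall>g \<in> Arr C. Cod C f = Dom C g \<longrightarrow>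
         Comp C g f \<in> Hom C (Dom C f) (Cod C g)) \<and>
     (\<forall>f \<in> Arr C. Comp C f (Ident C (Dom C f)) = f \<and> Comp C (Ident C (Cod C f)) f = f) \<and>
     (\<forall>f \<in> Arr C. \<forall>g \<in> Arr C. \<forall>h \<in> Arr C. Cod C f = Dom C g \<longrightarrow> Cod C g = Dom C h \<longrightarrow>
         Comp C h (Comp C g f) = Comp C (Comp C h g) f)"

definition is_functor ::
  "('o1, 'a1) category \<Rightarrow> ('o2, 'a2) category \<Rightarrow> ('o1 \<Rightarrow> 'o2) \<Rightarrow> ('a1 \<Rightarrow> 'a2) \<Rightarrow> bool" where
  "is_functor C D Fo Fa \<longleftrightarrow>
     is_category C \<and> is_category D \<and>
     (\<forall>x \<in> Obj C. Fo x \<in> Obj D) \<and>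
     (\<forall>f \<in> Arr C. Fa f \<in> Hom D (Fo (Dom C f)) (Fo (Cod C f))) \<and>
     (\<forall>x \<in> Obj C. Fa (Ident C x) = Ident D (Fo x)) \<and>
     (\<forall>f \<in> Arr C. \<forall>g \<in> Arr C. Cod C f = Dom C g \<longrightarrow> Fa (Comp C g f) = Comp D (Fa g) (Fa f))"

definition faithful_functor ::
  "('o1, 'a1) category \<Rightarrow> ('o2, 'a2) category \<Rightarrow> ('o1 \<Rightarrow> 'o2) \<Rightarrow> ('a1 \<Rightarrow> 'a2) \<Rightarrow> bool" where
  "faithful_functor C D Fo Fa \<longleftrightarrow> is_functor C D Fo Fa \<and>
     (\<forall>x \<in> Obj C. \<forall>y \<in> Obj C. inj_on Fa (Hom C x y))"

text \<open>An admissible order on the morphisms out of c: for every object c', a well-order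
  R c' on Hom(c,c') (reflexive relation, as in HOL's well_order_on), such that strict
  inequalities are preserved by postcomposition.\<close>

definition admissible_order :: "('o, 'a) category \<Rightarrow> 'o \<Rightarrow> ('o \<Rightarrow> 'a rel) \<Rightarrow> bool" where
  "admissible_order C c R \<longleftrightarrow>
     (\<forall>c' \<in> Obj C. well_order_on (Hom C c c') (R c')) \<and>
     (\<forall>c' \<in> Obj C. \<forall>c'' \<in> Obj C. \<forall>f \<in> Hom C c c'. \<forall>f' \<in> Hom C c c'. \<forall>g \<in> Hom C c' c''.
        (f, f') \<in> R c' \<and> f \<noteq> f' \<longrightarrow>
        (Comp C g f, Comp C g f') \<in> R c'' \<and> Comp C g f \<noteq> Comp C g f')"

definition G1 :: "('o, 'a) category \<Rightarrow> bool" where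
  "G1 C \<longleftrightarrow> (\<forall>c \<in> Obj C. \<exists>R. admissible_order C c R)"

end

theory Submission
  imports Defs
begin

text \<open>Order Hom(c, c') by comparing images in Hom(F c, F c'). Faithfulness makes this
  a well-order, and functoriality turns postcomposition with g into postcomposition
  with F g, so admissibility is inherited from the order on the morphisms out of F c.\<close>

definition pullback_order :: "'a set \<Rightarrow> ('a \<Rightarrow> 'b) \<Rightarrow> 'b rel \<Rightarrow> 'a rel" where
  "pullback_order A h S = {(x, y). x \<in> A \<and> y \<in> A \<and> (h x, h y) \<in> S}"

lemma in_pullback_order [simp]:
  "(x, y) \<in> pullback_order A h S \<longleftrightarrow> x \<in> A \<and> y \<in> A \<and> (h x, h y) \<in> S"
  by (simp add: pullback_order_def)

lemma well_order_on_pullback_order: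
  assumes S: "well_order_on B S" and inj: "inj_on h A" and im: "h ` A \<subseteq> B"
  shows "well_order_on A (pullback_order A h S)"
proof -
  let ?R = "pullback_order A h S"
  from S have refl: "refl_on B S" and trans: "trans S"
    and antisym: "antisym S" and total: "total_on B S"
    and wf: "wf (S - Id)"
    by (auto simp: well_order_on_def linear_order_on_def partial_order_on_def preorder_on_def)
  have "?R \<subseteq> A \<times> A"
    by (auto simp: pullback_order_def)
  moreover have "refl_on A ?R"
    using refl im by (auto simp: refl_on_def)
  moreover have "trans ?R"
    using trans by (auto simp: trans_def)
  moreover have "antisym ?R"
    using antisym inj by (auto simp: antisym_def dest: inj_onD)
  moreover have "total_on A ?R"
  proof (rule total_onI)
    fix x y assume "x \<in> A" "y \<in> A" "x \<noteq> y"
    then have "h x \<in> B" "h y \<in> B" "h x \<noteq> h y"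
      using im inj by (auto dest: inj_onD)
    then show "(x, y) \<in> ?R \<or> (y, x) \<in> ?R"
      using total \<open>x \<in> A\<close> \<open>y \<in> A\<close> by (auto simp: total_on_def)
  qed
  moreover have "wf (?R - Id)"
  proof (rule wf_subset)
    show "wf (inv_image (S - Id) h)"
      using wf by simp
    show "?R - Id \<subseteq> inv_image (S - Id) h"
      using inj by (auto dest: inj_onD)
  qed
  ultimately show ?thesis
    by (simp add: well_order_on_def linear_order_on_def partial_order_on_def preorder_on_def)
qed

lemma category_comp_in_Hom:
  assumes "is_category C" and "f \<in> Hom C x y" and "g \<in> Hom C y z"
  shows "Comp C g f \<in> Hom C x z"
  using assms by (auto simp: is_category_def Hom_def)

lemma functor_obj:
  assumes "is_functor C D Fo Fa" and "x \<in> Obj C"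
  shows "Fo x \<in> Obj D"
  using assms by (simp add: is_functor_def)

lemma functor_Hom:
  assumes "is_functor C D Fo Fa" and "f \<in> Hom C x y"
  shows "Fa f \<in> Hom D (Fo x) (Fo y)"
  using assms by (auto simp: is_functor_def Hom_def)

lemma functor_comp:
  assumes "is_functor C D Fo Fa" and "f \<in> Hom C x y" and "g \<in> Hom C y z"
  shows "Fa (Comp C g f) = Comp D (Fa g) (Fa f)"
  using assms by (simp add: is_functor_def Hom_def)

lemma admissible_order_well_order:
  "admissible_order C c R \<Longrightarrow> c' \<in> Obj C \<Longrightarrow> well_order_on (Hom C c c') (R c')"
  by (simp add: admissible_order_def)

lemma admissible_order_postcomp:
  assumes "admissible_order C c R" and "c' \<in> Obj C" and "c'' \<in> Obj C"
    and "f \<in> Hom C c c'" and "f' \<in> Hom C c c'" and "g \<in> Hom C c' c''"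
    and "(f, f') \<in> R c'" and "f \<noteq> f'"
  shows "(Comp C g f, Comp C g f') \<in> R c''" and "Comp C g f \<noteq> Comp C g f'"
  using assms unfolding admissible_order_def by blast+

lemma admissible_order_pullback:
  assumes F: "faithful_functor C D Fo Fa" and c: "c \<in> Obj C"
    and R: "admissible_order D (Fo c) R"
  shows "admissible_order C c (\<lambda>c'. pullback_order (Hom C c c') Fa (R (Fo c')))"
    (is "admissible_order C c ?R")
proof -
  have func: "is_functor C D Fo Fa" and cat: "is_category C"
    and inj: "\<And>x y. x \<in> Obj C \<Longrightarrow> y \<in> Obj C \<Longrightarrow> inj_on Fa (Hom C x y)"
    using F by (auto simp: faithful_functor_def is_functor_def)
  have "well_order_on (Hom C c c') (?R c')" if c': "c' \<in> Obj C" for c'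
    using well_order_on_pullback_order[OF admissible_order_well_order[OF R functor_obj[OF func c']]]
      inj[OF c c'] functor_Hom[OF func] by blast
  moreover have "(Comp C g f, Comp C g f') \<in> ?R c'' \<and> Comp C g f \<noteq> Comp C g f'"
    if c': "c' \<in> Obj C" and c'': "c'' \<in> Obj C" and f: "f \<in> Hom C c c'" and f': "f' \<in> Hom C c c'"
      and g: "g \<in> Hom C c' c''" and less: "(f, f') \<in> ?R c'" "f \<noteq> f'" for c' c'' f f' g
  proof -
    have "Fa f \<noteq> Fa f'"
      using less(2) inj[OF c c'] f f' by (auto dest: inj_onD)
    then have "(Comp D (Fa g) (Fa f), Comp D (Fa g) (Fa f')) \<in> R (Fo c'')"
      and "Comp D (Fa g) (Fa f) \<noteq> Comp D (Fa g) (Fa f')"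
      using admissible_order_postcomp[OF R functor_obj[OF func c'] functor_obj[OF func c'']
          functor_Hom[OF func f] functor_Hom[OF func f'] functor_Hom[OF func g]] less(1)
      by auto
    then show ?thesis
      unfolding in_pullback_order functor_comp[OF func f g, symmetric]
        functor_comp[OF func f' g, symmetric]
      using category_comp_in_Hom[OF cat f g] category_comp_in_Hom[OF cat f' g] by auto
  qed
  ultimately show ?thesis
    unfolding admissible_order_def by blast
qed

theorem lemma1p16:
  fixes C :: "('o1, 'a1) category" and D :: "('o2, 'a2) category"
    and Fo :: "'o1 \<Rightarrow> 'o2" and Fa :: "'a1 \<Rightarrow> 'a2"
  assumes "is_category D"
    and "G1 D"
    and "is_category C"
    and "faithful_functor C D Fo Fa"
  shows "G1 C"
  unfolding G1_def
proof
  fix c assume c: "c \<in> Obj C"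
  have "Fo c \<in> Obj D"
    using assms(4) c by (auto simp: faithful_functor_def intro: functor_obj)
  then obtain R where "admissible_order D (Fo c) R"
    using assms(2) by (auto simp: G1_def)
  then show "\<exists>R. admissible_order C c R"
    using admissible_order_pullback[OF assms(4) c] by blast
qed

end
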